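(* For any $k\geq1$, $n\geq0$ and $\ell\geq0$, the number of $k$-packed matrices of size $n$ with exactly $\ell$ nonzero entries is $$\#\mathcal{P}_{k,n,\ell}=\sum_{0\leq i,j\leq n}(-1)^{i+j}\binom{n}{i}\binom{n}{j}\binom{ij}{\ell}k^{\ell}.$$
   Context: $A_k=\{0,1,\dots,k\}$. A $k$-packed matrix of size $n$ is an $n\times n$ matrix with entries in $A_k$ such that each row and each column contains at least one nonzero entry (the empty matrix is the unique one of size $0$). $\mathcal{P}_{k,n,\ell}$ is the set of $k$-packed matrices of size $n$ with exactly $\ell$ nonzero entries. Binomial coefficients $\binom{m}{\ell}$ are $0$ when $\ell>m$, and $\binom{0}{0}=1$. *)

theory Defs
  imports Main
begin

text \<open>An n x n matrix with entries in A_k = {0..k}, represented as a function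
  nat => nat => nat whose entries outside {0..<n} x {0..<n} are 0 (so that
  distinct functions correspond to distinct matrices).\<close>
definition matrices_Ak :: "nat \<Rightarrow> nat \<Rightarrow> (nat \<Rightarrow> nat \<Rightarrow> nat) set" where
  "matrices_Ak k n = {M. (\<forall>i j. M i j \<le> k) \<and> (\<forall>i j. (i \<ge> n \<or> j \<ge> n) \<longrightarrow> M i j = 0)}"

definition k_packed :: "nat \<Rightarrow> nat \<Rightarrow> (nat \<Rightarrow> nat \<Rightarrow> nat) \<Rightarrow> bool" where
  "k_packed k n M \<longleftrightarrow> M \<in> matrices_Ak k n
     \<and> (\<forall>i<n. \<exists>j<n. M i j \<noteq> 0) \<and> (\<forall>j<n. \<exists>i<n. M i j \<noteq> 0)"

definition num_nonzero :: "nat \<Rightarrow> (nat \<Rightarrow> nat \<Rightarrow> nat) \<Rightarrow> nat" where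
  "num_nonzero n M = card {(i, j). i < n \<and> j < n \<and> M i j \<noteq> 0}"

definition packed_set :: "nat \<Rightarrow> nat \<Rightarrow> nat \<Rightarrow> (nat \<Rightarrow> nat \<Rightarrow> nat) set" where
  "packed_set k n l = {M. k_packed k n M \<and> num_nonzero n M = l}"

end

theory Submission
  imports Defs "HOL-Library.FuncSet"
begin

text \<open>A packed matrix is determined by its support S, an l-element subset of
  [n] \<times> [n] meeting every row and column, together with a choice of k nonzero values
  on S; so the count is k^l times the number of such supports. Those are counted by
  inclusion-exclusion over the sets R of rows and C of columns that S is confined to:
  there are exactly (|R| |C| choose l) l-subsets of R \<times> C, and the alternating sum of
  (-1)^|R| over all R containing the row projection of S vanishes unless that
  projection is all of [n].\<close>

lemma sum_supersets_minus_one_power: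
  assumes "finite X" "A \<subseteq> X"
  shows "(\<Sum>R\<in>Pow X. (-1::'a::ring_1) ^ card R * of_bool (A \<subseteq> R))
    = (if A = X then (-1) ^ card X else 0)"
proof -
  have "(\<Sum>R\<in>Pow X. (-1::'a) ^ card R * of_bool (A \<subseteq> R))
      = (\<Sum>R | R \<subseteq> X \<and> A \<subseteq> R. (-1) ^ card R)"
    using assms(1) by (simp add: sum.inter_filter Pow_def Int_def conj_commute)
  also have "\<dots> = (if A = X then (-1) ^ card X else 0)"
  proof (cases "A = X")
    case True
    then have "{R. R \<subseteq> X \<and> A \<subseteq> R} = {X}" by auto
    with True show ?thesis by simp
  next
    case False
    with assms have "finite {R. R \<subseteq> X \<and> A \<subseteq> R}" "A \<subset> X" by auto
    with False show ?thesis
      using card_subsupersets_even_odd[OF assms(1)] by (simp add: sum_alternating_cancels)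
  qed
  finally show ?thesis .
qed

lemma sum_Pow_by_card:
  assumes "finite X"
  shows "(\<Sum>R\<in>Pow X. f (card R))
    = (\<Sum>i\<le>card X. of_nat (card X choose i) * (f i :: 'a::comm_semiring_1))"
proof -
  have "(\<Sum>R\<in>Pow X. f (card R)) = (\<Sum>i\<le>card X. \<Sum>R | R \<in> Pow X \<and> card R = i. f (card R))"
    by (rule sum.group[symmetric]) (use assms card_mono in auto)
  also have "\<dots> = (\<Sum>i\<le>card X. of_nat (card X choose i) * f i)"
    by (rule sum.cong) (simp_all add: n_subsets[OF assms, symmetric] cong: conj_cong)
  finally show ?thesis .
qed

lemma card_covering_subsets_Times:
  assumes "finite X" "finite Y"
  shows "(-1) ^ (card X + card Y) * int (card {S. S \<subseteq> X \<times> Y \<and> card S = l \<and> fst ` S = X \<and> snd ` S = Y})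
    = (\<Sum>R\<in>Pow X. \<Sum>C\<in>Pow Y. (-1) ^ (card R + card C) * int ((card R * card C) choose l))"
proof -
  define Q where "Q = {S. S \<subseteq> X \<times> Y \<and> card S = l}"
  have "finite Q"
    unfolding Q_def by (rule finite_subset[of _ "Pow (X \<times> Y)"]) (use assms in auto)
  have choose_eq: "int ((card R * card C) choose l)
      = (\<Sum>S\<in>Q. of_bool (fst ` S \<subseteq> R) * of_bool (snd ` S \<subseteq> C))"
    if "R \<subseteq> X" "C \<subseteq> Y" for R C
  proof -
    have "finite R" "finite C" using that assms finite_subset by auto
    then have "(card R * card C) choose l = card {S. S \<subseteq> R \<times> C \<and> card S = l}"
      by (simp add: n_subsets card_cartesian_product)
    also have "{S. S \<subseteq> R \<times> C \<and> card S = l} = {S \<in> Q. fst ` S \<subseteq> R \<and> snd ` S \<subseteq> C}"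
      using that unfolding Q_def by force
    finally show ?thesis
      using \<open>finite Q\<close> by (simp add: Int_def flip: of_bool_conj)
  qed
  have "(\<Sum>R\<in>Pow X. \<Sum>C\<in>Pow Y. (-1) ^ (card R + card C) * int ((card R * card C) choose l))
      = (\<Sum>S\<in>Q. (\<Sum>R\<in>Pow X. (-1) ^ card R * of_bool (fst ` S \<subseteq> R))
                * (\<Sum>C\<in>Pow Y. (-1) ^ card C * of_bool (snd ` S \<subseteq> C)))"
    by (simp add: choose_eq sum_product sum_distrib_left power_add mult_ac sum.swap[of _ Q]
        sum.swap[of _ "Pow Y" "Pow X"])
  also have "\<dots> = (\<Sum>S\<in>Q. (-1) ^ (card X + card Y) * of_bool (fst ` S = X \<and> snd ` S = Y))"
  proof (rule sum.cong)
    fix S assume "S \<in> Q"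
    then have "fst ` S \<subseteq> X" "snd ` S \<subseteq> Y" unfolding Q_def by auto
    show "(\<Sum>R\<in>Pow X. (-1::int) ^ card R * of_bool (fst ` S \<subseteq> R))
        * (\<Sum>C\<in>Pow Y. (-1) ^ card C * of_bool (snd ` S \<subseteq> C))
        = (-1) ^ (card X + card Y) * of_bool (fst ` S = X \<and> snd ` S = Y)"
      by (simp only: sum_supersets_minus_one_power[OF assms(1) \<open>fst ` S \<subseteq> X\<close>]
          sum_supersets_minus_one_power[OF assms(2) \<open>snd ` S \<subseteq> Y\<close>]) (simp add: power_add)
  qed simp
  also have "\<dots> = (-1) ^ (card X + card Y) * int (card {S \<in> Q. fst ` S = X \<and> snd ` S = Y})"
    using \<open>finite Q\<close> by (simp add: Int_def flip: sum_distrib_left)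
  finally show ?thesis
    by (simp add: Q_def conj_assoc)
qed

lemma card_covering_subsets_Times_eq_sum:
  assumes "finite X" "finite Y"
  shows "(-1) ^ (card X + card Y) * int (card {S. S \<subseteq> X \<times> Y \<and> card S = l \<and> fst ` S = X \<and> snd ` S = Y})
    = (\<Sum>i\<le>card X. \<Sum>j\<le>card Y. (-1) ^ (i + j) * int (card X choose i) * int (card Y choose j)
        * int ((i * j) choose l))"
proof -
  have "(\<Sum>C\<in>Pow Y. (-1) ^ (i + card C) * int ((i * card C) choose l))
      = (\<Sum>j\<le>card Y. (-1) ^ (i + j) * int (card Y choose j) * int ((i * j) choose l))" for i
    by (subst sum_Pow_by_card[OF assms(2)]) (simp add: mult_ac)
  then show ?thesis
    unfolding card_covering_subsets_Times[OF assms]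
    by (subst sum_Pow_by_card[OF assms(1)]) (simp add: sum_distrib_left mult_ac)
qed

definition support :: "nat \<Rightarrow> (nat \<Rightarrow> nat \<Rightarrow> nat) \<Rightarrow> (nat \<times> nat) set" where
  "support n M = {(i, j). i < n \<and> j < n \<and> M i j \<noteq> 0}"

lemma support_subset: "support n M \<subseteq> {..<n} \<times> {..<n}"
  by (auto simp: support_def)

lemma num_nonzero_eq_card_support: "num_nonzero n M = card (support n M)"
  by (simp add: num_nonzero_def support_def)

lemma fst_support_eq_iff: "fst ` support n M = {..<n} \<longleftrightarrow> (\<forall>i<n. \<exists>j<n. M i j \<noteq> 0)"
proof -
  have "fst ` support n M \<subseteq> {..<n}"
    by (auto simp: support_def)
  moreover have "i \<in> fst ` support n M \<longleftrightarrow> (\<exists>j<n. M i j \<noteq> 0)" if "i < n" for i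
    using that by (force simp: support_def image_iff)
  ultimately show ?thesis
    by blast
qed

lemma snd_support_eq_iff: "snd ` support n M = {..<n} \<longleftrightarrow> (\<forall>j<n. \<exists>i<n. M i j \<noteq> 0)"
proof -
  have "snd ` support n M \<subseteq> {..<n}"
    by (auto simp: support_def)
  moreover have "j \<in> snd ` support n M \<longleftrightarrow> (\<exists>i<n. M i j \<noteq> 0)" if "j < n" for j
    using that by (force simp: support_def image_iff)
  ultimately show ?thesis
    by blast
qed

lemma k_packed_iff_support:
  "k_packed k n M \<longleftrightarrow> M \<in> matrices_Ak k n \<and> fst ` support n M = {..<n} \<and> snd ` support n M = {..<n}"
  by (simp add: k_packed_def fst_support_eq_iff snd_support_eq_iff)

lemma bij_betw_matrices_with_support:
  assumes "S \<subseteq> {..<n} \<times> {..<n}"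
  shows "bij_betw (\<lambda>f i j. if (i, j) \<in> S then f (i, j) else 0)
           (S \<rightarrow>\<^sub>E {1..k}) {M \<in> matrices_Ak k n. support n M = S}"
proof (rule bij_betw_byWitness[where f' = "\<lambda>M. restrict (\<lambda>(i, j). M i j) S"])
  show "\<forall>f\<in>S \<rightarrow>\<^sub>E {1..k}. restrict (\<lambda>(i, j). if (i, j) \<in> S then f (i, j) else 0) S = f"
    by (auto simp: fun_eq_iff PiE_def extensional_def)
  show "\<forall>M\<in>{M \<in> matrices_Ak k n. support n M = S}.
      (\<lambda>i j. if (i, j) \<in> S then restrict (\<lambda>(i, j). M i j) S (i, j) else 0) = M"
    by (auto simp: fun_eq_iff support_def matrices_Ak_def)
  show "(\<lambda>f i j. if (i, j) \<in> S then f (i, j) else 0) ` (S \<rightarrow>\<^sub>E {1..k})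
      \<subseteq> {M \<in> matrices_Ak k n. support n M = S}"
    using assms by (fastforce simp: matrices_Ak_def support_def PiE_def Pi_def)
  show "(\<lambda>M. restrict (\<lambda>(i, j). M i j) S) ` {M \<in> matrices_Ak k n. support n M = S}
      \<subseteq> S \<rightarrow>\<^sub>E {1..k}"
    by (auto simp: support_def matrices_Ak_def Suc_le_eq)
qed

lemma
  assumes "S \<subseteq> {..<n} \<times> {..<n}"
  shows finite_matrices_with_support: "finite {M \<in> matrices_Ak k n. support n M = S}"
    and card_matrices_with_support: "card {M \<in> matrices_Ak k n. support n M = S} = k ^ card S"
proof -
  have "finite S"
    using assms finite_subset by blast
  then show "finite {M \<in> matrices_Ak k n. support n M = S}"
    using bij_betw_finite[OF bij_betw_matrices_with_support[OF assms]] by (simp add: finite_PiE)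
  show "card {M \<in> matrices_Ak k n. support n M = S} = k ^ card S"
    using bij_betw_same_card[OF bij_betw_matrices_with_support[OF assms]] \<open>finite S\<close>
    by (simp add: card_PiE)
qed

theorem proposition1p2:
  fixes k n l :: nat
  assumes "k \<ge> 1"
  shows "int (card (packed_set k n l)) =
    (\<Sum>i\<le>n. \<Sum>j\<le>n. (-1) ^ (i + j) * int (n choose i) * int (n choose j)
        * int ((i * j) choose l) * int k ^ l)"
proof -
  define U where "U = {..<n}"
  define P where "P = {S. S \<subseteq> U \<times> U \<and> card S = l \<and> fst ` S = U \<and> snd ` S = U}"
  define F where "F S = {M \<in> matrices_Ak k n. support n M = S}" for S
  have packed_eq: "packed_set k n l = (\<Union>S\<in>P. F S)"
    by (auto simp: packed_set_def k_packed_iff_support num_nonzero_eq_card_support support_subset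
        P_def F_def U_def)
  have "finite P"
    unfolding P_def U_def by (rule finite_subset[of _ "Pow ({..<n} \<times> {..<n})"]) auto
  then have "card (packed_set k n l) = (\<Sum>S\<in>P. card (F S))"
    unfolding packed_eq
    by (rule card_UN_disjoint) (auto simp: F_def P_def U_def finite_matrices_with_support)
  also have "\<dots> = card P * k ^ l"
    by (simp add: F_def P_def U_def card_matrices_with_support)
  finally have "int (card (packed_set k n l)) = int (card P) * int k ^ l"
    by simp
  also have "int (card P) = (\<Sum>i\<le>n. \<Sum>j\<le>n. (-1) ^ (i + j) * int (n choose i) * int (n choose j)
        * int ((i * j) choose l))"
    using card_covering_subsets_Times_eq_sum[of U U l] by (simp add: P_def U_def flip: mult_2)
  finally show ?thesis
    by (simp add: sum_distrib_right)
qed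

end
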